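(* Consider the four-player team game of dominoes described in the context. Over all possible deals and all possible legal games that end in a tranca, the largest number of points that the winning team can obtain is exactly $107$. That is, there exists a deal and a legal game ending in a tranca in which the winning team obtains $107$ points, and in every legal game ending in a tranca the winning team obtains at most $107$ points.
   Context: Domino tiles: the set of tiles consists of the 28 unordered pairs $[a,b]=[b,a]$ with $a,b\in\{0,1,\dots,6\}$; the number of points (pips) of $[a,b]$ is $a+b$. Four players, numbered 1 to 4, play; players 1 and 3 form one team and players 2 and 4 the other. The 28 tiles are dealt, 7 to each player (the initial hands). Players take turns in cyclic order $1,2,3,4,1,\dots$. The starting player places any one of their tiles on the table, forming a line of tiles (the board) with two open ends. On each subsequent turn, the player whose turn it is must, if they hold a tile containing a number equal to the number shown at one of the two open ends, place such a tile at that end (with equal numbers adjacent), the other number of the tile becoming the new open end; if they hold no such tile, they pass. A game ends either when a player places their last tile, or in a tranca (blocked game): a position in which no player holds a tile that can be placed. In a game ending in a tranca, the team whose two players' remaining tiles have the smaller total number of pips wins, and it obtains as points the total number of pips on the tiles remaining in the hands of the two players of the other (losing) team. *)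

theory Defs
  imports Main
begin

text \<open>Tiles [a,b] are represented as ordered pairs (a,b) with a \<le> b \<le> 6.
  Players 1,2,3,4 are represented by indices 0,1,2,3; team {0,2} (players 1,3)
  and team {1,3} (players 2,4).\<close>

type_synonym tile = "nat \<times> nat"

definition tiles :: "tile set" where
  "tiles = {(a, b). a \<le> b \<and> b \<le> 6}"

definition pips :: "tile \<Rightarrow> nat" where
  "pips t = fst t + snd t"

definition has_num :: "nat \<Rightarrow> tile \<Rightarrow> bool" where
  "has_num n t = (fst t = n \<or> snd t = n)"

definition other_num :: "nat \<Rightarrow> tile \<Rightarrow> nat" where
  "other_num n t = (if fst t = n then snd t else fst t)"

text \<open>A state: the hands of the players and the two open ends of the board
  (None = empty board, before the first tile).\<close>
type_synonym state = "(nat \<Rightarrow> tile set) \<times> (nat \<times> nat) option"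

definition is_deal :: "(nat \<Rightarrow> tile set) \<Rightarrow> bool" where
  "is_deal h = ((\<forall>p<4. h p \<subseteq> tiles \<and> card (h p) = 7) \<and>
               (\<forall>p<4. \<forall>q<4. p \<noteq> q \<longrightarrow> h p \<inter> h q = {}) \<and>
               (\<Union>p<4. h p) = tiles)"

definition step :: "nat \<Rightarrow> state \<Rightarrow> state \<Rightarrow> bool" where
  "step p s s' = (case snd s of
      None \<Rightarrow> (\<exists>x\<in>fst s p. fst s' = (fst s)(p := fst s p - {x}) \<and> snd s' = Some (fst x, snd x))
    | Some (l, r) \<Rightarrow>
        (\<exists>x\<in>fst s p. has_num l x \<and> fst s' = (fst s)(p := fst s p - {x}) \<and> snd s' = Some (other_num l x, r))
      \<or> (\<exists>x\<in>fst s p. has_num r x \<and> fst s' = (fst s)(p := fst s p - {x}) \<and> snd s' = Some (l, other_num r x))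
      \<or> ((\<not> (\<exists>x\<in>fst s p. has_num l x \<or> has_num r x)) \<and> s' = s))"

definition blocked :: "state \<Rightarrow> bool" where
  "blocked s = (\<exists>l r. snd s = Some (l, r) \<and>
                 (\<forall>p<4. \<not> (\<exists>x\<in>fst s p. has_num l x \<or> has_num r x)))"

text \<open>A legal game (list of successive states) ending in a tranca: starts from a deal
  with empty board, every turn is legal, no player ever runs out of tiles (so the game
  never ends by domino), no earlier position is a tranca, and the last position is one.\<close>
definition tranca_game :: "state list \<Rightarrow> bool" where
  "tranca_game ss = (ss \<noteq> [] \<and> is_deal (fst (hd ss)) \<and> snd (hd ss) = None \<and>
     (\<forall>k < length ss - 1. step (k mod 4) (ss ! k) (ss ! (k + 1))) \<and>
     (\<forall>k < length ss. \<forall>p<4. fst (ss ! k) p \<noteq> {}) \<and>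
     (\<forall>k < length ss - 1. \<not> blocked (ss ! k)) \<and>
     blocked (last ss))"

definition team_pips :: "(nat \<Rightarrow> tile set) \<Rightarrow> nat set \<Rightarrow> nat" where
  "team_pips h T = (\<Sum>p\<in>T. \<Sum>x\<in>h p. pips x)"

text \<open>Points obtained by the winning team (None if the totals tie: no winner).\<close>
definition winner_points :: "state \<Rightarrow> nat option" where
  "winner_points s = (let A = team_pips (fst s) {0, 2}; B = team_pips (fst s) {1, 3} in
     if A < B then Some B else if B < A then Some A else None)"

end

theory Submission
  imports Defs
begin

(*
  At a tranca the number e at an open end occurs in no hand, so the hand S of a player consists
  of tiles over the set nums_of S of numbers it shows, a set avoiding e; the k(k+1)/2 tiles over
  k numbers carry k + 1 times the sum of these numbers in pips. A team ending with 13 or 14 tiles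
  has placed at most one tile, resp. none. A number held by both partners was an open end at
  some time, and one of them then had to place a tile at that turn or the turn before; hence the
  numbers the partners share lie on a single tile neither of them holds, and there are none if
  the team never placed. Counting pips under these constraints gives at most 107; a team with at
  most 12 tiles holds at most 7 * 12 + 22 = 106 pips, 22 being the total excess over 7 pips of
  the heavy tiles. An explicit game of 17 turns attains 107.
*)

section \<open>Tiles over a set of numbers\<close>

definition tile_nums :: "tile \<Rightarrow> nat set" where
  "tile_nums t = {fst t, snd t}"

definition nums_of :: "tile set \<Rightarrow> nat set" where
  "nums_of S = (\<Union>t\<in>S. tile_nums t)"

definition tiles_over :: "nat set \<Rightarrow> tile set" where
  "tiles_over A = {(x, y). x \<in> A \<and> y \<in> A \<and> x \<le> y}"

lemma tile_nums_min_max: "tile_nums (min a b, max a b) = {a, b}"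
  unfolding tile_nums_def by (auto simp: min_def max_def)

lemma tiles_eq_tiles_over: "tiles = tiles_over {..6}"
  unfolding tiles_def tiles_over_def by auto

lemma finite_tiles_over: "finite A \<Longrightarrow> finite (tiles_over A)"
  by (rule finite_subset[of _ "A \<times> A"]) (auto simp: tiles_over_def)

lemma finite_tiles: "finite tiles"
  by (simp add: tiles_eq_tiles_over finite_tiles_over)

lemma tiles_over_mono: "A \<subseteq> B \<Longrightarrow> tiles_over A \<subseteq> tiles_over B"
  unfolding tiles_over_def by auto

lemma tiles_over_Int: "tiles_over A \<inter> tiles_over B = tiles_over (A \<inter> B)"
  unfolding tiles_over_def by auto

lemma tile_nums_subset: "t \<in> tiles_over A \<Longrightarrow> tile_nums t \<subseteq> A"
  unfolding tiles_over_def tile_nums_def by auto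

lemma subset_tiles_over_nums_of: "S \<subseteq> tiles \<Longrightarrow> S \<subseteq> tiles_over (nums_of S)"
  unfolding tiles_def tiles_over_def nums_of_def tile_nums_def by fastforce

lemma nums_of_subset: "S \<subseteq> tiles \<Longrightarrow> nums_of S \<subseteq> {..6}"
  unfolding tiles_def nums_of_def tile_nums_def by auto

lemma finite_nums_of: "S \<subseteq> tiles \<Longrightarrow> finite (nums_of S)"
  by (rule finite_subset[OF nums_of_subset]) simp_all

lemma tiles_over_insert:
  "tiles_over (insert z A) = tiles_over A \<union> (\<lambda>y. (min z y, max z y)) ` insert z A"
proof (intro set_eqI iffI)
  fix t assume t: "t \<in> tiles_over (insert z A)"
  obtain a b where ab: "t = (a, b)" "a \<in> insert z A" "b \<in> insert z A" "a \<le> b"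
    using t unfolding tiles_over_def by auto
  consider "a = z" | "b = z" | "a \<noteq> z" "b \<noteq> z" by blast
  then show "t \<in> tiles_over A \<union> (\<lambda>y. (min z y, max z y)) ` insert z A"
  proof cases
    case 1
    then have "t = (min z b, max z b)" using ab by simp
    then show ?thesis using ab by blast
  next
    case 2
    then have "t = (min z a, max z a)" using ab by simp
    then show ?thesis using ab by blast
  qed (use ab in \<open>auto simp: tiles_over_def\<close>)
qed (auto simp: tiles_over_def min_def max_def split: if_splits)

lemma tiles_over_insert_disjoint:
  "z \<notin> A \<Longrightarrow> tiles_over A \<inter> (\<lambda>y. (min z y, max z y)) ` insert z A = {}"
  unfolding tiles_over_def by (auto simp: min_def max_def split: if_splits)

lemma inj_on_tile_with: "inj_on (\<lambda>y. (min z y, max z y)) B"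
  unfolding inj_on_def by (auto simp: min_def max_def split: if_splits)

lemma card_tiles_over: "finite A \<Longrightarrow> 2 * card (tiles_over A) = card A * (card A + 1)"
proof (induction A rule: finite_induct)
  case (insert z A)
  have "card (tiles_over (insert z A)) = card (tiles_over A) + card (insert z A)"
    unfolding tiles_over_insert
    using card_Un_disjoint[OF finite_tiles_over[OF insert(1)] _
        tiles_over_insert_disjoint[OF insert(2)]]
      card_image[OF inj_on_tile_with] insert(1)
    by (simp del: image_insert)
  then show ?case using insert by simp
qed (simp add: tiles_over_def)

lemma sum_pips_tiles_over: "finite A \<Longrightarrow> sum pips (tiles_over A) = (card A + 1) * \<Sum>A"
proof (induction A rule: finite_induct)
  case (insert z A)
  have "sum pips ((\<lambda>y. (min z y, max z y)) ` insert z A) = (\<Sum>y\<in>insert z A. z + y)"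
    unfolding sum.reindex[OF inj_on_tile_with]
    by (intro sum.cong) (auto simp: pips_def min_def max_def)
  then have "sum pips (tiles_over (insert z A)) =
      sum pips (tiles_over A) + (card A + 1) * z + (z + \<Sum>A)"
    unfolding tiles_over_insert
    using sum.union_disjoint[OF finite_tiles_over[OF insert(1)] _
        tiles_over_insert_disjoint[OF insert(2)], of pips] insert(1,2)
    by (simp add: sum.distrib del: image_insert)
  then show ?case using insert by (simp add: algebra_simps)
qed (simp add: tiles_over_def)

lemma card_le_card_tiles_over_nums_of:
  assumes "S \<subseteq> tiles"
  shows "2 * card S \<le> card (nums_of S) * (card (nums_of S) + 1)"
proof -
  have "card S \<le> card (tiles_over (nums_of S))"
    using assms by (intro card_mono finite_tiles_over finite_nums_of subset_tiles_over_nums_of)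
  then show ?thesis using card_tiles_over[OF finite_nums_of[OF assms]] by linarith
qed

lemma four_le_if_triangular: "14 \<le> k * (k + 1) \<Longrightarrow> 4 \<le> (k::nat)"
  using mult_le_mono[of k 3 "k + 1" 4] by linarith

lemma three_le_if_triangular: "12 \<le> k * (k + 1) \<Longrightarrow> 3 \<le> (k::nat)"
  using mult_le_mono[of k 2 "k + 1" 3] by linarith

lemma three_le_card_nums_of: "S \<subseteq> tiles \<Longrightarrow> 6 \<le> card S \<Longrightarrow> 3 \<le> card (nums_of S)"
  using card_le_card_tiles_over_nums_of[of S] by (intro three_le_if_triangular) linarith

lemma four_le_card_nums_of: "S \<subseteq> tiles \<Longrightarrow> 7 \<le> card S \<Longrightarrow> 4 \<le> card (nums_of S)"
  using card_le_card_tiles_over_nums_of[of S] by (intro four_le_if_triangular) linarith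

lemma card_nums_of_two_hands:
  assumes "S \<subseteq> tiles" "T \<subseteq> tiles" "card S \<le> 7" "card T \<le> 7" "13 \<le> card S + card T"
  shows "7 \<le> card (nums_of S) + card (nums_of T)"
proof (cases "card S = 7")
  case True
  then show ?thesis
    using four_le_card_nums_of[OF assms(1)] three_le_card_nums_of[OF assms(2)] assms(5) by simp
next
  case False
  then show ?thesis
    using three_le_card_nums_of[OF assms(1)] four_le_card_nums_of[OF assms(2)] assms(3-5) by simp
qed

lemma tiles_over_nums_of_eq:
  assumes "S \<subseteq> tiles" "2 * card S = card (nums_of S) * (card (nums_of S) + 1)"
  shows "S = tiles_over (nums_of S)"
proof (rule card_subset_eq)
  show "finite (tiles_over (nums_of S))" using finite_tiles_over finite_nums_of assms(1) by blast
  show "S \<subseteq> tiles_over (nums_of S)" using subset_tiles_over_nums_of assms(1) .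
  show "card S = card (tiles_over (nums_of S))"
    using card_tiles_over[OF finite_nums_of[OF assms(1)]] assms(2) by linarith
qed

section \<open>Pip bounds for the two hands of a team\<close>

lemma sum_avoiding_le:
  fixes A :: "nat set"
  assumes "A \<subseteq> {..6}" "e \<le> 6" "e \<notin> A"
  shows "\<Sum>A + e \<le> 21"
proof -
  have "\<Sum>A + e = \<Sum>(insert e A)"
    using assms finite_subset[OF assms(1)] by simp
  also have "\<dots> \<le> \<Sum>{..6::nat}"
    using assms by (intro sum_mono2) auto
  also have "\<dots> = 21"
    by (simp add: numeral_eq_Suc atMost_Suc)
  finally show ?thesis .
qed

lemma card_avoiding_le:
  fixes A :: "nat set"
  assumes "A \<subseteq> {..6}" "e \<le> 6" "e \<notin> A"
  shows "card A \<le> 6"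
proof -
  have "card (insert e A) \<le> card {..6::nat}"
    using assms by (intro card_mono) auto
  then show ?thesis
    using assms finite_subset[OF assms(1)] by simp
qed

lemma sum_three_le_15:
  assumes "B \<subseteq> {..6}" "card B = 3"
  shows "\<Sum>B \<le> (15::nat)"
proof -
  obtain x y z where B: "B = {x, y, z}" "x \<noteq> y" "y \<noteq> z" "x \<noteq> z"
    using assms(2) card_3_iff by metis
  have "x \<le> 6" "y \<le> 6" "z \<le> 6"
    using assms(1) unfolding B by auto
  then show ?thesis
    using B by simp
qed

lemma sum_four_le_Min_plus_15:
  fixes B :: "nat set"
  assumes "B \<subseteq> {..6}" "card B = 4"
  shows "\<Sum>B \<le> Min B + 15"
proof -
  have fin: "finite B" using assms(2) by (intro card_ge_0_finite) simp
  then have "Min B \<in> B" using Min_in assms(2) by fastforce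
  then have "\<Sum>B = Min B + \<Sum>(B - {Min B})"
    using sum.remove[OF fin, of _ "\<lambda>x. x"] by simp
  moreover have "\<Sum>(B - {Min B}) \<le> 15"
    using assms \<open>Min B \<in> B\<close> fin by (intro sum_three_le_15) (auto simp: card_Diff_singleton)
  ultimately show ?thesis by linarith
qed

lemma card_mult_le_sum_pips_plus_weights:
  fixes g :: "tile \<Rightarrow> nat"
  assumes "finite D" "finite K"
    and "\<And>t. t \<in> D \<Longrightarrow> c \<le> pips t + g t" and "\<And>t. t \<notin> K \<Longrightarrow> g t = 0"
  shows "card D * c \<le> sum pips D + sum g K"
proof -
  have "card D * c \<le> (\<Sum>t\<in>D. pips t + g t)"
    using sum_mono[of D "\<lambda>_. c"] assms(3) by simp
  also have "\<dots> = sum pips D + sum g (D \<inter> K)"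
    using sum.Int_Diff[OF assms(1), of g K] assms(4) by (simp add: sum.distrib)
  also have "sum g (D \<inter> K) \<le> sum g K"
    using assms(2) by (intro sum_mono2) auto
  finally show ?thesis by simp
qed

lemma three_tiles_without_0:
  assumes "D \<subseteq> tiles" "card D = 3" "\<forall>t\<in>D. 0 \<notin> tile_nums t"
  shows "9 \<le> sum pips D"
proof -
  \<comment> \<open>Only (1,1) and (1,2) avoid 0 with fewer than 4 pips; g makes up their deficit.\<close>
  define g :: "tile \<Rightarrow> nat" where "g t = (if t = (1,1) then 2 else if t = (1,2) then 1 else 0)" for t
  have "card D * 4 \<le> sum pips D + sum g {(1,1), (1,2)}"
  proof (rule card_mult_le_sum_pips_plus_weights)
    show "finite D" using assms(2) by (intro card_ge_0_finite) simp
    fix t assume "t \<in> D"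
    moreover obtain a b where t: "t = (a, b)" by fastforce
    ultimately have "a \<le> b" "b \<le> 6" "a \<noteq> 0" "b \<noteq> 0"
      using assms(1,3) by (auto simp: tiles_def tile_nums_def)
    then show "4 \<le> pips t + g t" unfolding t pips_def g_def by auto
  qed (auto simp: g_def)
  then show ?thesis using assms(2) by (simp add: g_def)
qed

lemma three_tiles_without_1:
  assumes "D \<subseteq> tiles" "card D = 3" "\<forall>t\<in>D. 1 \<notin> tile_nums t"
  shows "5 \<le> sum pips D"
proof -
  define g :: "tile \<Rightarrow> nat" where "g t = (if t = (0,0) then 3 else if t = (0,2) then 1 else 0)" for t
  have "card D * 3 \<le> sum pips D + sum g {(0,0), (0,2)}"
  proof (rule card_mult_le_sum_pips_plus_weights)
    show "finite D" using assms(2) by (intro card_ge_0_finite) simp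
    fix t assume "t \<in> D"
    moreover obtain a b where t: "t = (a, b)" by fastforce
    ultimately have "a \<le> b" "b \<le> 6" "a \<noteq> 1" "b \<noteq> 1"
      using assms(1,3) by (auto simp: tiles_def tile_nums_def)
    then show "3 \<le> pips t + g t" unfolding t pips_def g_def by auto
  qed (auto simp: g_def)
  then show ?thesis using assms(2) by (simp add: g_def)
qed

lemma three_tiles_avoiding:
  assumes "D \<subseteq> tiles" "card D = 3" "\<forall>t\<in>D. e \<notin> tile_nums t"
  shows "9 \<le> sum pips D + 5 * e"
proof -
  consider "e = 0" | "e = 1" | "2 \<le> e" by linarith
  then show ?thesis
    using three_tiles_without_0[OF assms(1,2)] three_tiles_without_1[OF assms(1,2)] assms(3)
    by cases simp_all
qed

lemma two_tiles_over_above: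
  assumes "D \<subseteq> tiles_over A" "card D = 2" "\<forall>x\<in>A. p \<le> x"
  shows "4 * p + 1 \<le> sum pips D"
proof -
  define g :: "tile \<Rightarrow> nat" where "g t = (if t = (p,p) then 1 else 0)" for t
  have "card D * (2 * p + 1) \<le> sum pips D + sum g {(p,p)}"
  proof (rule card_mult_le_sum_pips_plus_weights)
    show "finite D" using assms(2) by (intro card_ge_0_finite) simp
    fix t assume "t \<in> D"
    moreover obtain a b where t: "t = (a, b)" by fastforce
    ultimately have "a \<le> b" "p \<le> a"
      using assms(1,3) by (auto simp: tiles_over_def)
    then show "2 * p + 1 \<le> pips t + g t" unfolding t pips_def g_def by auto
  qed (auto simp: g_def)
  then show ?thesis using assms(2) by (simp add: g_def)
qed

lemma tiles_enum:
  "tiles = set [(0,0),(0,1),(1,1),(0,2),(1,2),(2,2),(0,3),(1,3),(2,3),(3,3),(0,4),(1,4),(2,4),(3,4),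
    (4,4),(0,5),(1,5),(2,5),(3,5),(4,5),(5,5),(0,6),(1,6),(2,6),(3,6),(4,6),(5,6),(6,6)]"
proof -
  have "tiles = set (concat (map (\<lambda>b. map (\<lambda>a. (a, b)) [0..<Suc b]) [0..<7]))"
  proof (intro set_eqI iffI)
    fix t assume "t \<in> tiles"
    then obtain a b where "t = (a, b)" "a \<le> b" "b < 7" unfolding tiles_def by auto
    then show "t \<in> set (concat (map (\<lambda>b. map (\<lambda>a. (a, b)) [0..<Suc b]) [0..<7]))"
      by (auto intro!: bexI[of _ b])
  qed (auto simp: tiles_def)
  then show ?thesis by (simp add: upt_rec numeral_eq_Suc)
qed

lemma sum_pips_le_7_card:
  assumes "S \<subseteq> tiles"
  shows "sum pips S \<le> 7 * card S + 22"
proof -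
  have "sum pips S \<le> (\<Sum>t\<in>S. 7 + (pips t - 7))"
    by (rule sum_mono) simp
  also have "\<dots> = 7 * card S + (\<Sum>t\<in>S. pips t - 7)"
    by (simp add: sum.distrib)
  also have "(\<Sum>t\<in>S. pips t - 7) \<le> (\<Sum>t\<in>tiles. pips t - 7)"
    using assms finite_tiles by (intro sum_mono2) auto
  also have "(\<Sum>t\<in>tiles. pips t - 7) = 22"
    unfolding tiles_enum by (subst sum.distinct_set_conv_list) (simp_all add: pips_def)
  finally show ?thesis by simp
qed

lemma sum_pips_seven_tiles_over_four:
  assumes "S \<subseteq> tiles_over B - {(u, u)}" "u \<in> B" "finite B" "card B = 4" "card S = 7"
  shows "sum pips S + 2 * u + 4 * Min B + 1 \<le> 5 * \<Sum>B"
proof -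
  define U where "U = tiles_over B - {(u, u)}"
  have uu: "(u, u) \<in> tiles_over B" using assms(2) by (simp add: tiles_over_def)
  have fin: "finite U" using finite_tiles_over[OF assms(3)] by (simp add: U_def)
  have "card U = 9"
    using card_tiles_over[OF assms(3)] assms(4) uu finite_tiles_over[OF assms(3)]
    by (simp add: U_def card_Diff_singleton)
  then have "card (U - S) = 2"
    using assms(1,5) fin by (simp add: U_def card_Diff_subset finite_subset)
  then have "4 * Min B + 1 \<le> sum pips (U - S)"
    using assms(2,3) by (intro two_tiles_over_above[where A = B]) (auto simp: U_def)
  moreover have "sum pips U + 2 * u = 5 * \<Sum>B"
    using sum.remove[OF finite_tiles_over[OF assms(3)] uu, of pips]
      sum_pips_tiles_over[OF assms(3)] assms(4)
    by (simp add: U_def pips_def)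
  moreover have "sum pips U = sum pips S + sum pips (U - S)"
    using sum.subset_diff[OF _ fin, of S pips] assms(1) by (simp add: U_def add.commute)
  ultimately show ?thesis by linarith
qed

lemma pips_le_107_one_shared:
  assumes tiles: "S \<subseteq> tiles" "T \<subseteq> tiles" and disj: "S \<inter> T = {}"
    and avoid: "e \<le> 6" "e \<notin> nums_of S" "e \<notin> nums_of T"
    and shared: "nums_of S \<inter> nums_of T = {u}" and cards: "card S = 6" "card T = 7"
  shows "sum pips S + sum pips T \<le> 107"
proof -
  define A where "A = nums_of S"
  define B where "B = nums_of T"
  have fin: "finite A" "finite B" using finite_nums_of tiles by (auto simp: A_def B_def)
  have AB: "A \<union> B \<subseteq> {..6}" "e \<notin> A \<union> B"
    using nums_of_subset tiles avoid by (auto simp: A_def B_def)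
  have "card (A \<union> B) + 1 = card A + card B"
    using card_Un_Int[OF fin] shared by (simp add: A_def B_def)
  then have cardA: "card A = 3" and cardB: "card B = 4"
    using three_le_card_nums_of[OF tiles(1)] four_le_card_nums_of[OF tiles(2)] cards
      card_avoiding_le[OF AB(1) avoid(1) AB(2)] by (simp_all add: A_def B_def)
  have S: "S = tiles_over A"
    using tiles_over_nums_of_eq[OF tiles(1)] cardA cards by (simp add: A_def)
  have u: "u \<in> A" "u \<in> B" using shared by (auto simp: A_def B_def)
  then have "(u, u) \<notin> T" using disj S by (auto simp: tiles_over_def)
  then have "T \<subseteq> tiles_over B - {(u, u)}"
    using subset_tiles_over_nums_of[OF tiles(2)] by (auto simp: B_def)
  then have T: "sum pips T + 2 * u + 4 * Min B + 1 \<le> 5 * \<Sum>B"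
    using sum_pips_seven_tiles_over_four u(2) fin(2) cardB cards by simp
  have "\<Sum>(A \<union> B) + e \<le> 21"
    using sum_avoiding_le[OF AB(1) avoid(1) AB(2)] .
  moreover have "\<Sum>(A \<union> B) + u = \<Sum>A + \<Sum>B"
    using sum.union_inter[OF fin] shared by (simp add: A_def B_def)
  moreover have "\<Sum>B \<le> Min B + 15"
    using AB(1) cardB by (intro sum_four_le_Min_plus_15) auto
  moreover have "e = 0 \<Longrightarrow> 1 \<le> Min B"
    using avoid(3) Min_in[OF fin(2)] u(2) unfolding B_def
    by (metis One_nat_def Suc_leI empty_iff neq0_conv)
  moreover have "u \<le> 6" using AB(1) u(2) by auto
  moreover have "sum pips S = 4 * \<Sum>A"
    using sum_pips_tiles_over[OF fin(1)] cardA S by simp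
  ultimately show ?thesis using T by (cases "e = 0") linarith+
qed

lemma four_le_card_nums_of_if_missing:
  assumes "S \<subseteq> tiles" "t \<in> tiles_over (nums_of S)" "t \<notin> S" "6 \<le> card S"
  shows "4 \<le> card (nums_of S)"
proof -
  have fin: "finite (tiles_over (nums_of S))"
    using finite_tiles_over finite_nums_of assms(1) by blast
  have "card S \<le> card (tiles_over (nums_of S) - {t})"
    using subset_tiles_over_nums_of[OF assms(1)] assms(3) fin by (intro card_mono) auto
  then have "7 \<le> card (tiles_over (nums_of S))"
    using assms(2,4) fin by (simp add: card_Diff_singleton)
  then show ?thesis
    using card_tiles_over[OF finite_nums_of[OF assms(1)]] by (intro four_le_if_triangular) linarith
qed

lemma card_nums_of_two_shared:
  assumes tiles: "S \<subseteq> tiles" "T \<subseteq> tiles"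
    and avoid: "e \<le> 6" "e \<notin> nums_of S" "e \<notin> nums_of T"
    and shared: "nums_of S \<inter> nums_of T = {u, v}" "u < v" "(u, v) \<notin> S" "(u, v) \<notin> T"
    and cards: "6 \<le> card S" "6 \<le> card T"
  shows "card (nums_of S) = 4" "card (nums_of T) = 4"
proof -
  have "(u, v) \<in> tiles_over (nums_of S)" "(u, v) \<in> tiles_over (nums_of T)"
    using shared(1,2) by (auto simp: tiles_over_def)
  then have "4 \<le> card (nums_of S)" "4 \<le> card (nums_of T)"
    using four_le_card_nums_of_if_missing tiles shared(3,4) cards by auto
  moreover have "card (nums_of S \<union> nums_of T) \<le> 6"
    using nums_of_subset tiles avoid by (intro card_avoiding_le) auto
  moreover have "card (nums_of S \<union> nums_of T) + 2 = card (nums_of S) + card (nums_of T)"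
    using card_Un_Int[OF finite_nums_of[OF tiles(1)] finite_nums_of[OF tiles(2)]] shared(1,2)
    by simp
  ultimately show "card (nums_of S) = 4" "card (nums_of T) = 4" by linarith+
qed

lemma tiles_over_Un_four_numbers:
  assumes "finite A" "finite B" "card A = 4" "card B = 4" "A \<inter> B = {u, v}" "u < v"
  defines "U \<equiv> tiles_over A \<union> tiles_over B - {(u, v)}"
  shows "card U = 16" and "sum pips U + 4 * (u + v) = 5 * \<Sum>A + 5 * \<Sum>B"
proof -
  have fin: "finite (tiles_over A)" "finite (tiles_over B)" "finite {u, v}"
    using assms(1,2) finite_tiles_over by auto
  have shared: "tiles_over A \<inter> tiles_over B = tiles_over {u, v}"
    using tiles_over_Int assms(5) by simp
  have uv: "(u, v) \<in> tiles_over A \<union> tiles_over B"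
    using assms(5,6) by (auto simp: tiles_over_def)
  have "card (tiles_over A) = 10" "card (tiles_over B) = 10" "card (tiles_over {u, v}) = 3"
    using card_tiles_over[OF assms(1)] card_tiles_over[OF assms(2)] card_tiles_over[OF fin(3)]
      assms(3,4,6)
    by simp_all
  then have "card (tiles_over A \<union> tiles_over B) = 17"
    using card_Un_Int[OF fin(1,2)] shared by simp
  then show "card U = 16"
    using uv fin by (simp add: U_def card_Diff_singleton)
  have "sum pips (tiles_over A) = 5 * \<Sum>A" "sum pips (tiles_over B) = 5 * \<Sum>B"
    "sum pips (tiles_over {u, v}) = 3 * (u + v)"
    using sum_pips_tiles_over[OF assms(1)] sum_pips_tiles_over[OF assms(2)]
      sum_pips_tiles_over[OF fin(3)]
      assms(3,4,6) by simp_all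
  then have "sum pips (tiles_over A \<union> tiles_over B) + 3 * (u + v) = 5 * \<Sum>A + 5 * \<Sum>B"
    using sum.union_inter[OF fin(1,2), of pips] shared by simp
  moreover have "sum pips (tiles_over A \<union> tiles_over B) = (u + v) + sum pips U"
    using sum.remove[OF _ uv, of pips] fin by (simp add: U_def pips_def)
  ultimately show "sum pips U + 4 * (u + v) = 5 * \<Sum>A + 5 * \<Sum>B" by simp
qed

lemma pips_le_107_two_shared:
  assumes tiles: "S \<subseteq> tiles" "T \<subseteq> tiles" and disj: "S \<inter> T = {}"
    and avoid: "e \<le> 6" "e \<notin> nums_of S" "e \<notin> nums_of T"
    and shared: "nums_of S \<inter> nums_of T = {u, v}" "u < v" "(u, v) \<notin> S" "(u, v) \<notin> T"
    and cards: "card S + card T = 13" "6 \<le> card S" "6 \<le> card T"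
  shows "sum pips S + sum pips T \<le> 107"
proof -
  define A where "A = nums_of S"
  define B where "B = nums_of T"
  define U where "U = tiles_over A \<union> tiles_over B - {(u, v)}"
  have fin: "finite A" "finite B" using finite_nums_of tiles by (auto simp: A_def B_def)
  have AB: "A \<union> B \<subseteq> {..6}" "e \<notin> A \<union> B"
    using nums_of_subset tiles avoid by (auto simp: A_def B_def)
  have "card A = 4" "card B = 4"
    using card_nums_of_two_shared[OF tiles avoid shared(1-4) cards(2,3)]
    by (simp_all add: A_def B_def)
  note U = tiles_over_Un_four_numbers[OF fin this shared(1,2)[folded A_def B_def], folded U_def]
  have ST: "S \<union> T \<subseteq> U"
    using subset_tiles_over_nums_of tiles shared(3,4) by (auto simp: U_def A_def B_def)
  have finU: "finite U" using U(1) by (simp add: card_ge_0_finite)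
  have missing_over: "U - (S \<union> T) \<subseteq> tiles_over (A \<union> B)"
    using tiles_over_mono[of A "A \<union> B"] tiles_over_mono[of B "A \<union> B"] by (auto simp: U_def)
  have "U - (S \<union> T) \<subseteq> tiles"
    using missing_over tiles_over_mono[OF AB(1)] by (auto simp: tiles_eq_tiles_over)
  moreover have "card (U - (S \<union> T)) = 3"
    using card_Diff_subset[OF finite_subset[OF ST finU] ST] card_Un_disjoint[OF _ _ disj]
      finite_subset[OF ST finU] U(1) cards(1) by simp
  moreover have "\<forall>t\<in>U - (S \<union> T). e \<notin> tile_nums t"
    using missing_over tile_nums_subset AB(2) by blast
  ultimately have "9 \<le> sum pips (U - (S \<union> T)) + 5 * e"
    by (rule three_tiles_avoiding)
  moreover have "sum pips U = sum pips S + sum pips T + sum pips (U - (S \<union> T))"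
    using sum.subset_diff[OF ST finU, of pips] sum.union_disjoint[OF _ _ disj, of pips]
      finite_subset[OF ST finU] by simp
  moreover have "\<Sum>(A \<union> B) + e \<le> 21"
    using sum_avoiding_le[OF AB(1) avoid(1) AB(2)] .
  moreover have "\<Sum>(A \<union> B) + (u + v) = \<Sum>A + \<Sum>B"
    using sum.union_inter[OF fin] shared(1,2) by (simp add: A_def B_def)
  moreover have "v \<le> 6" using AB(1) shared(1) by (auto simp: A_def B_def)
  ultimately show ?thesis
    using U(2) shared(2) unfolding distrib_left by linarith
qed

lemma finite_card_le_2_cases:
  fixes X :: "'a::linorder set"
  assumes "finite X" "card X \<le> 2"
  obtains "X = {}" | u where "X = {u}" | u v where "X = {u, v}" "u < v"
proof -
  consider "card X = 0" | "card X = 1" | "card X = 2" using assms(2) by linarith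
  then show thesis
  proof cases
    case 3
    then obtain x y where "X = {x, y}" "x \<noteq> y" by (auto simp: card_2_iff)
    then show thesis using that(3) by (metis insert_commute linorder_neq_iff)
  qed (use assms(1) that in \<open>auto simp: card_1_singleton_iff\<close>)
qed

lemma nums_of_two_hands_meet:
  assumes tiles: "S \<subseteq> tiles" "T \<subseteq> tiles" and avoid: "e \<le> 6" "e \<notin> nums_of S" "e \<notin> nums_of T"
    and cards: "card S \<le> 7" "card T \<le> 7" "13 \<le> card S + card T"
  shows "nums_of S \<inter> nums_of T \<noteq> {}"
proof -
  have "card (nums_of S \<union> nums_of T) \<le> 6"
    using nums_of_subset tiles avoid by (intro card_avoiding_le) auto
  then have "0 < card (nums_of S \<inter> nums_of T)"
    using card_Un_Int[OF finite_nums_of[OF tiles(1)] finite_nums_of[OF tiles(2)]]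
      card_nums_of_two_hands[OF tiles cards]
    by linarith
  then show ?thesis by auto
qed

lemma tile_eq_if_covers:
  assumes "t \<in> tiles" "{u, v} \<subseteq> tile_nums t" "u < v"
  shows "t = (u, v)"
  using assms by (cases t) (auto simp: tiles_def tile_nums_def)

lemma pips_le_107:
  assumes tiles: "S \<subseteq> tiles" "T \<subseteq> tiles" and disj: "S \<inter> T = {}"
    and avoid: "e \<le> 6" "e \<notin> nums_of S" "e \<notin> nums_of T"
    and cards: "card S \<le> 7" "card T \<le> 7" "13 \<le> card S + card T"
    and full: "card S + card T = 14 \<Longrightarrow> nums_of S \<inter> nums_of T = {}"
    and covered: "t \<in> tiles" "t \<notin> S" "t \<notin> T" "nums_of S \<inter> nums_of T \<subseteq> tile_nums t"
  shows "sum pips S + sum pips T \<le> 107"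
proof -
  have fin: "finite (nums_of S)" "finite (nums_of T)" using finite_nums_of tiles by auto
  have "card (nums_of S \<inter> nums_of T) \<le> card (tile_nums t)"
    using covered(4) by (intro card_mono) (auto simp: tile_nums_def)
  also have "card (tile_nums t) \<le> 2"
    unfolding tile_nums_def by (cases "fst t = snd t") auto
  finally have shared: "card (nums_of S \<inter> nums_of T) \<le> 2" "nums_of S \<inter> nums_of T \<noteq> {}"
    using nums_of_two_hands_meet[OF tiles avoid cards] by auto
  then have "card S + card T \<noteq> 14" using full by blast
  then have total: "card S + card T = 13" using cards by linarith
  show ?thesis
  proof (rule finite_card_le_2_cases[OF _ shared(1)])
    fix u assume u: "nums_of S \<inter> nums_of T = {u}"
    consider "card S = 6" "card T = 7" | "card S = 7" "card T = 6" using total cards by linarith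
    then show ?thesis
    proof cases
      case 1
      then show ?thesis using pips_le_107_one_shared[OF tiles disj avoid u] by simp
    next
      case 2
      then show ?thesis
        using pips_le_107_one_shared[OF tiles(2,1) _ avoid(1,3,2), of u] disj u
        by (simp add: Int_commute)
    qed
  next
    fix u v assume uv: "nums_of S \<inter> nums_of T = {u, v}" "u < v"
    then have "t = (u, v)" using covered(1,4) tile_eq_if_covers by simp
    moreover have "6 \<le> card S" "6 \<le> card T" using total cards by linarith+
    ultimately show ?thesis
      using pips_le_107_two_shared[OF tiles disj avoid uv] covered(2,3) total by simp
  qed (use fin shared(2) in auto)
qed

section \<open>Single turns\<close>

definition board_ends :: "state \<Rightarrow> nat set" where
  "board_ends s = (case snd s of None \<Rightarrow> {} | Some (l, r) \<Rightarrow> {l, r})"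

lemma board_ends_Some: "snd s = Some (l, r) \<Longrightarrow> board_ends s = {l, r}"
  unfolding board_ends_def by simp

lemma tile_nums_other_num: "has_num l x \<Longrightarrow> tile_nums x = {l, other_num l x}"
  unfolding has_num_def tile_nums_def other_num_def by auto

lemma step_other_hand: "step p s s' \<Longrightarrow> q \<noteq> p \<Longrightarrow> fst s' q = fst s q"
  unfolding step_def by (auto split: option.splits)

lemma step_hand_subset: "step p s s' \<Longrightarrow> fst s' p \<subseteq> fst s p"
  unfolding step_def by (auto split: option.splits)

lemma step_board_nonempty: "step p s s' \<Longrightarrow> snd s' \<noteq> None"
  unfolding step_def by (auto split: option.splits)

lemma step_pass:
  assumes "step p s s'" "fst s' p = fst s p"
  shows "s' = s" "snd s \<noteq> None" "\<forall>y\<in>fst s p. board_ends s \<inter> tile_nums y = {}"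
  using assms unfolding step_def board_ends_def tile_nums_def has_num_def
  by (auto split: option.splits)

lemma step_keeps_an_end: "step p s s' \<Longrightarrow> snd s \<noteq> None \<Longrightarrow> board_ends s \<inter> board_ends s' \<noteq> {}"
  unfolding step_def board_ends_def by (auto split: option.splits)

lemma step_first_tile:
  assumes "step p s s'" "snd s = None" "y \<in> fst s p" "y \<notin> fst s' p"
  shows "board_ends s' = tile_nums y"
proof -
  obtain x where "x \<in> fst s p" "fst s' = (fst s)(p := fst s p - {x})" "snd s' = Some (fst x, snd x)"
    using assms(1,2) unfolding step_def by auto
  moreover then have "y = x" using assms(3,4) by auto
  ultimately show ?thesis by (cases x) (simp add: board_ends_def tile_nums_def)
qed

lemma step_placed_tile:
  assumes "step p s s'" "snd s = Some (l, r)" "y \<in> fst s p" "y \<notin> fst s' p"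
  shows "\<exists>a b w. board_ends s = {a, b} \<and> tile_nums y = {a, w} \<and> board_ends s' = {w, b}"
proof -
  have removed: "fst s' = (fst s)(p := fst s p - {x}) \<Longrightarrow> y = x" for x
    using assms(3,4) by auto
  have "(\<exists>x\<in>fst s p. has_num l x \<and> fst s' = (fst s)(p := fst s p - {x}) \<and>
        snd s' = Some (other_num l x, r)) \<or>
      (\<exists>x\<in>fst s p. has_num r x \<and> fst s' = (fst s)(p := fst s p - {x}) \<and>
        snd s' = Some (l, other_num r x)) \<or>
      s' = s"
    using assms(1,2) unfolding step_def by auto
  then show ?thesis
  proof (elim disjE bexE conjE)
    fix x assume "has_num l x" "fst s' = (fst s)(p := fst s p - {x})"
      "snd s' = Some (other_num l x, r)"
    then have "board_ends s = {l, r} \<and> tile_nums y = {l, other_num l x} \<and>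
        board_ends s' = {other_num l x, r}"
      using removed board_ends_Some[OF assms(2)] board_ends_Some tile_nums_other_num by simp
    then show ?thesis by blast
  next
    fix x assume "has_num r x" "fst s' = (fst s)(p := fst s p - {x})"
      "snd s' = Some (l, other_num r x)"
    then have "board_ends s = {r, l} \<and> tile_nums y = {r, other_num r x} \<and>
        board_ends s' = {other_num r x, l}"
      using removed board_ends_Some[OF assms(2)] board_ends_Some tile_nums_other_num
      by (simp add: insert_commute)
    then show ?thesis by blast
  qed (use assms in simp)
qed

lemma step_removed_tile:
  assumes "step p s s'" "y \<in> fst s p" "y \<notin> fst s' p"
  shows "tile_nums y \<subseteq> board_ends s \<union> board_ends s'" "board_ends s' \<subseteq> board_ends s \<union> tile_nums y"
proof -
  have "tile_nums y \<subseteq> board_ends s \<union> board_ends s' \<and> board_ends s' \<subseteq> board_ends s \<union> tile_nums y"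
  proof (cases "snd s")
    case None
    then show ?thesis using step_first_tile[OF assms(1) _ assms(2,3)] by simp
  next
    case (Some lr)
    then show ?thesis using step_placed_tile[OF assms(1) _ assms(2,3)] by (cases lr) fastforce
  qed
  then show "tile_nums y \<subseteq> board_ends s \<union> board_ends s'"
    "board_ends s' \<subseteq> board_ends s \<union> tile_nums y"
    by simp_all
qed

lemma step_board_subset:
  assumes "step p s s'"
  shows "board_ends s' \<subseteq> board_ends s \<union> nums_of (fst s p)"
proof (cases "fst s' p = fst s p")
  case True
  then show ?thesis using step_pass[OF assms] by simp
next
  case False
  then obtain y where y: "y \<in> fst s p" "y \<notin> fst s' p" using step_hand_subset[OF assms] by blast
  then show ?thesis using step_removed_tile(2)[OF assms y] by (auto simp: nums_of_def)
qed

lemma board_ends_nonempty: "snd s \<noteq> None \<Longrightarrow> board_ends s \<noteq> {}"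
  unfolding board_ends_def by auto

section \<open>Games ending in a tranca\<close>

locale tranca_run =
  fixes ss :: "state list"
  assumes tranca_game: "tranca_game ss"
begin

definition N :: nat where
  "N = length ss - 1"

abbreviation hand :: "nat \<Rightarrow> nat \<Rightarrow> tile set" where
  "hand k p \<equiv> fst (ss ! k) p"

abbreviation board :: "nat \<Rightarrow> nat set" where
  "board k \<equiv> board_ends (ss ! k)"

lemma last_ss: "last ss = ss ! N"
  using tranca_game unfolding tranca_game_def N_def by (simp add: last_conv_nth)

lemma step_at: "k < N \<Longrightarrow> step (k mod 4) (ss ! k) (ss ! Suc k)"
  using tranca_game unfolding tranca_game_def N_def by simp

lemma deal: "is_deal (fst (ss ! 0))"
  using tranca_game unfolding tranca_game_def by (auto simp: hd_conv_nth)

lemma empty_board_0: "snd (ss ! 0) = None"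
  using tranca_game unfolding tranca_game_def by (auto simp: hd_conv_nth)

lemma blocked_N: "blocked (ss ! N)"
  using tranca_game last_ss unfolding tranca_game_def by simp

lemma board_nonempty: "0 < k \<Longrightarrow> k \<le> N \<Longrightarrow> snd (ss ! k) \<noteq> None"
  using step_board_nonempty[OF step_at[of "k - 1"]] by simp

lemma hand_antimono: "k \<le> m \<Longrightarrow> m \<le> N \<Longrightarrow> hand m q \<subseteq> hand k q"
proof (induction m rule: dec_induct)
  case (step m)
  have "hand (Suc m) q \<subseteq> hand m q"
    using step_at[of m] step.prems step_hand_subset step_other_hand by (cases "q = m mod 4") auto
  then show ?case using step by simp
qed simp

lemma hand_subset_tiles: "k \<le> N \<Longrightarrow> q < 4 \<Longrightarrow> hand k q \<subseteq> tiles"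
  using hand_antimono[of 0 k q] deal unfolding is_deal_def by blast

lemma card_hand_0: "q < 4 \<Longrightarrow> card (hand 0 q) = 7"
  using deal unfolding is_deal_def by blast

lemma finite_hand: "k \<le> N \<Longrightarrow> q < 4 \<Longrightarrow> finite (hand k q)"
  using hand_subset_tiles finite_tiles finite_subset by blast

lemma card_hand_le: "j \<le> k \<Longrightarrow> k \<le> N \<Longrightarrow> q < 4 \<Longrightarrow> card (hand k q) \<le> card (hand j q)"
  using hand_antimono finite_hand by (intro card_mono) auto

lemma hands_disjoint: "k \<le> N \<Longrightarrow> p < 4 \<Longrightarrow> q < 4 \<Longrightarrow> p \<noteq> q \<Longrightarrow> hand k p \<inter> hand k q = {}"
  using hand_antimono[of 0 k p] hand_antimono[of 0 k q] deal unfolding is_deal_def by blast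

definition placed :: "nat \<Rightarrow> bool" where
  "placed k \<longleftrightarrow> k < N \<and> hand (Suc k) (k mod 4) \<noteq> hand k (k mod 4)"

lemma not_placed:
  assumes "k < N" "\<not> placed k"
  shows "ss ! Suc k = ss ! k" "snd (ss ! k) \<noteq> None"
    "\<forall>y\<in>hand k (k mod 4). board k \<inter> tile_nums y = {}"
  using step_pass[OF step_at[OF assms(1)]] assms unfolding placed_def by auto

lemma placed_0: "0 < N \<Longrightarrow> placed 0"
  using not_placed(2)[of 0] empty_board_0 by blast

lemma placed_tile:
  assumes "placed k"
  obtains y where "y \<in> hand k (k mod 4)" "y \<notin> hand (Suc k) (k mod 4)"
  using assms step_hand_subset[OF step_at] unfolding placed_def by blast

lemma removed_by_mover:
  assumes "k < N" "q < 4" "y \<in> hand k q" "y \<notin> hand (Suc k) q"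
  shows "k mod 4 = q" "placed k"
proof -
  show "k mod 4 = q"
    using step_other_hand[OF step_at[OF assms(1)], of q] assms(3,4) by auto
  then show "placed k"
    using assms unfolding placed_def by auto
qed

lemma removed_tile_nums:
  assumes "k < N" "y \<in> hand k (k mod 4)" "y \<notin> hand (Suc k) (k mod 4)"
  shows "tile_nums y \<subseteq> board k \<union> board (Suc k)"
  using step_removed_tile(1)[OF step_at[OF assms(1)] assms(2,3)] .

lemma tile_removed:
  "t \<in> hand 0 q \<Longrightarrow> m \<le> N \<Longrightarrow> t \<notin> hand m q \<Longrightarrow> \<exists>k<m. t \<in> hand k q \<and> t \<notin> hand (Suc k) q"
proof (induction m)
  case (Suc m)
  then show ?case by (cases "t \<in> hand m q") (auto intro: less_SucI)
qed simp

lemma placed_card_Suc: "placed k \<Longrightarrow> card (hand (Suc k) (k mod 4)) < card (hand k (k mod 4))"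
proof -
  assume "placed k"
  then have "k < N" "hand (Suc k) (k mod 4) \<subset> hand k (k mod 4)"
    using step_hand_subset[OF step_at] unfolding placed_def by auto
  then show ?thesis by (intro psubset_card_mono finite_hand) auto
qed

lemma card_hand_N_placed: "placed k \<Longrightarrow> card (hand N (k mod 4)) \<le> 6"
  using placed_card_Suc[of k] card_hand_le[of "Suc k" N "k mod 4"] card_hand_le[of 0 k "k mod 4"]
    card_hand_0[of "k mod 4"] unfolding placed_def by simp

lemma card_hand_N_placed_twice:
  assumes "placed k" "placed k'" "k < k'" "k mod 4 = k' mod 4"
  shows "card (hand N (k mod 4)) \<le> 5"
  using placed_card_Suc[of k] placed_card_Suc[of k'] card_hand_le[of "Suc k'" N "k mod 4"]
    card_hand_le[of "Suc k" k' "k mod 4"] card_hand_le[of 0 k "k mod 4"]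
    card_hand_0[of "k mod 4"] assms
  unfolding placed_def by simp

lemma card_hand_N_le_7: "q < 4 \<Longrightarrow> card (hand N q) \<le> 7"
  using card_hand_le[of 0 N q] card_hand_0 by simp

lemma team_player: "(k::nat) mod 2 = c \<Longrightarrow> c < 2 \<Longrightarrow> k mod 4 = c \<or> k mod 4 = c + 2"
  by presburger

lemma team_places_at_most_once:
  assumes "c < 2" "13 \<le> card (hand N c) + card (hand N (c + 2))"
    and "placed k" "k mod 2 = c" "placed k'" "k' mod 2 = c"
  shows "k = k'"
proof (rule ccontr)
  assume "k \<noteq> k'"
  have le7: "card (hand N c) \<le> 7" "card (hand N (c + 2)) \<le> 7"
    using card_hand_N_le_7 assms(1) by simp_all
  show False
  proof (cases "k mod 4 = k' mod 4")
    case True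
    then have "card (hand N (k mod 4)) \<le> 5"
      using card_hand_N_placed_twice assms(3,5) \<open>k \<noteq> k'\<close> by (metis linorder_neq_iff)
    then show False using team_player[OF assms(4,1)] assms(2) le7 by auto
  next
    case False
    then have "(k mod 4 = c \<and> k' mod 4 = c + 2) \<or> (k mod 4 = c + 2 \<and> k' mod 4 = c)"
      using team_player[OF assms(4,1)] team_player[OF assms(6,1)] by auto
    then have "card (hand N c) \<le> 6 \<and> card (hand N (c + 2)) \<le> 6"
      using card_hand_N_placed[OF assms(3)] card_hand_N_placed[OF assms(5)]
      by (elim disjE conjE) simp_all
    then show False using assms(2) by linarith
  qed
qed

lemma team_never_places:
  assumes "c < 2" "card (hand N c) + card (hand N (c + 2)) = 14" "placed k"
  shows "k mod 2 \<noteq> c"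
proof
  assume "k mod 2 = c"
  then have "k mod 4 = c \<or> k mod 4 = c + 2"
    using team_player assms(1) by blast
  then have "card (hand N c) \<le> 6 \<or> card (hand N (c + 2)) \<le> 6"
    using card_hand_N_placed[OF assms(3)] by (elim disjE) simp_all
  moreover have "card (hand N c) \<le> 7" "card (hand N (c + 2)) \<le> 7"
    using card_hand_N_le_7 assms(1) by simp_all
  ultimately show False using assms(2) by linarith
qed

lemma board_le_6: "k \<le> N \<Longrightarrow> board k \<subseteq> {..6}"
proof (induction k)
  case 0
  then show ?case using empty_board_0 by (simp add: board_ends_def)
next
  case (Suc k)
  then have "board (Suc k) \<subseteq> board k \<union> nums_of (hand k (k mod 4))"
    using step_board_subset[OF step_at] by simp
  moreover have "nums_of (hand k (k mod 4)) \<subseteq> {..6}"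
    using Suc.prems by (intro nums_of_subset hand_subset_tiles) auto
  ultimately show ?case using Suc by auto
qed

lemma board_N_unmatched:
  assumes "p < 4"
  shows "board N \<inter> nums_of (hand N p) = {}"
proof -
  obtain l r where "snd (ss ! N) = Some (l, r)" "\<forall>p<4. \<not> (\<exists>x\<in>hand N p. has_num l x \<or> has_num r x)"
    using blocked_N unfolding blocked_def by blast
  then show ?thesis
    using assms by (fastforce simp: board_ends_def nums_of_def tile_nums_def has_num_def)
qed

lemma final_end:
  obtains l where "l \<in> board N" "l \<le> 6"
proof -
  obtain l r where "snd (ss ! N) = Some (l, r)"
    using blocked_N unfolding blocked_def by blast
  then have "l \<in> board N" by (simp add: board_ends_def)
  then show thesis using that board_le_6[of N] by auto
qed

definition unheld :: "tile \<Rightarrow> bool" where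
  "unheld t \<longleftrightarrow> t \<in> tiles \<and> (\<forall>p<4. t \<notin> hand N p)"

lemma unheld_with_final_end:
  assumes "l \<in> board N" "b \<le> 6"
  shows "unheld (min l b, max l b)"
proof -
  have "l \<le> 6" using board_le_6[of N] assms(1) by auto
  then have "(min l b, max l b) \<in> tiles" using assms(2) by (simp add: tiles_def)
  moreover have "(min l b, max l b) \<notin> hand N p" if "p < 4" for p
    using board_N_unmatched[OF that] assms(1) tile_nums_min_max[of l b] unfolding nums_of_def
    by blast
  ultimately show ?thesis by (simp add: unheld_def)
qed

lemma removed_unheld:
  assumes "k < N" "q < 4" "y \<in> hand k q" "y \<notin> hand (Suc k) q"
  shows "unheld y"
proof -
  have "y \<notin> hand N p" if "p < 4" for p
  proof (cases "p = q")
    case True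
    then show ?thesis using hand_antimono[of "Suc k" N q] assms by auto
  next
    case False
    then show ?thesis
      using hands_disjoint[of k p q] hand_antimono[of k N p] assms that by auto
  qed
  moreover have "y \<in> tiles" using hand_subset_tiles[of k q] assms by auto
  ultimately show ?thesis by (simp add: unheld_def)
qed

definition shared :: "nat \<Rightarrow> nat set" where
  "shared c = nums_of (hand N c) \<inter> nums_of (hand N (c + 2))"

lemma shared_held:
  assumes "c < 2" "x \<in> shared c" "k \<le> N" "k mod 2 = c"
  obtains y where "y \<in> hand k (k mod 4)" "x \<in> tile_nums y"
proof -
  have "x \<in> nums_of (hand N (k mod 4))"
    using team_player[OF assms(4,1)] assms(2) unfolding shared_def by auto
  then show ?thesis
    using hand_antimono[OF assms(3) order_refl] that unfolding nums_of_def by blast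
qed

lemma shared_off_board_N: "c < 2 \<Longrightarrow> shared c \<inter> board N = {}"
  using board_N_unmatched[of c] unfolding shared_def by auto

lemma shared_on_board:
  assumes "c < 2" "x \<in> shared c"
  obtains m where "0 < m" "m \<le> N" "x \<in> board m"
proof -
  obtain l where l: "l \<in> board N" "l \<le> 6" by (rule final_end)
  have "x \<le> 6"
    using assms nums_of_subset[OF hand_subset_tiles[of N c]] unfolding shared_def by auto
  \<comment> \<open>The tile joining x to a final open end was placed, so x was an open end then.\<close>
  define t where "t = (min l x, max l x)"
  have "unheld t" using unheld_with_final_end[OF l(1) \<open>x \<le> 6\<close>] by (simp add: t_def)
  then obtain q where q: "q < 4" "t \<in> hand 0 q" "t \<notin> hand N q"
    using deal unfolding unheld_def is_deal_def by blast
  then obtain k where k: "k < N" "t \<in> hand k q" "t \<notin> hand (Suc k) q"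
    using tile_removed by blast
  then have "k mod 4 = q" using removed_by_mover q(1) by blast
  then have "tile_nums t \<subseteq> board k \<union> board (Suc k)"
    using removed_tile_nums[of k t] k by simp
  then have "x \<in> board k \<union> board (Suc k)"
    using tile_nums_min_max by (simp add: t_def)
  then show ?thesis
  proof
    assume "x \<in> board k"
    moreover have "board 0 = {}" using empty_board_0 by (simp add: board_ends_def)
    ultimately have "0 < k" by (cases k) auto
    then show thesis using that k(1) \<open>x \<in> board k\<close> by simp
  next
    assume "x \<in> board (Suc k)"
    then show thesis using that[of "Suc k"] k(1) by simp
  qed
qed

lemma team_placed_when_shared_shown:
  assumes "c < 2" "x \<in> shared c" "0 < m" "m \<le> N" "x \<in> board m"
  obtains j where "j mod 2 = c" "placed j" "j = m \<or> Suc j = m"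
proof -
  have "m \<noteq> N" using shared_off_board_N[OF assms(1)] assms(2,5) by blast
  then have "m < N" using assms(4) by simp
  \<comment> \<open>A partner still holds a tile with x, so cannot pass while x is an open end.\<close>
  have placed_if_shown: "placed k" if k: "k < N" "k mod 2 = c" "x \<in> board k" for k
  proof (rule ccontr)
    assume "\<not> placed k"
    have "k \<le> N" using k(1) by simp
    then obtain y where "y \<in> hand k (k mod 4)" "x \<in> tile_nums y"
      using shared_held[OF assms(1,2) _ k(2)] by blast
    then show False using not_placed(3)[OF k(1) \<open>\<not> placed k\<close>] k(3) by blast
  qed
  show thesis
  proof (cases "m mod 2 = c")
    case True
    then show thesis using that placed_if_shown \<open>m < N\<close> assms(5) by blast
  next
    case False
    obtain j where j: "m = Suc j" using assms(3) by (cases m) auto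
    then have "j mod 2 = c" using False assms(1) by presburger
    have "placed j"
    proof (rule ccontr)
      assume "\<not> placed j"
      then have "x \<in> board j"
        using not_placed(1)[of j] \<open>m < N\<close> j assms(5) by simp
      then show False
        using placed_if_shown[of j] \<open>\<not> placed j\<close> \<open>m < N\<close> j \<open>j mod 2 = c\<close> by simp
    qed
    then show thesis using that \<open>j mod 2 = c\<close> j by blast
  qed
qed

lemma shared_empty_if_team_never_places:
  assumes "c < 2" "\<And>j. placed j \<Longrightarrow> j mod 2 \<noteq> c"
  shows "shared c = {}"
proof (rule equals0I)
  fix x assume "x \<in> shared c"
  then obtain m where "0 < m" "m \<le> N" "x \<in> board m"
    using shared_on_board assms(1) by blast
  then obtain j where "j mod 2 = c" "placed j"
    using team_placed_when_shared_shown[OF assms(1) \<open>x \<in> shared c\<close>] by blast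
  then show False using assms(2) by blast
qed

lemma shared_shown_only_around:
  assumes "c < 2" "13 \<le> card (hand N c) + card (hand N (c + 2))" "placed j" "j mod 2 = c"
    and "x \<in> shared c" "0 < m" "m \<le> N" "x \<in> board m"
  shows "m = j \<or> m = Suc j"
proof -
  obtain j' where "j' mod 2 = c" "placed j'" "j' = m \<or> Suc j' = m"
    by (rule team_placed_when_shared_shown[OF assms(1,5-8)])
  moreover have "j' = j"
    using team_places_at_most_once[OF assms(1-4)] calculation(1,2) by simp
  ultimately show ?thesis by auto
qed

lemma shared_subset_boards:
  assumes "c < 2" "13 \<le> card (hand N c) + card (hand N (c + 2))" "placed j" "j mod 2 = c"
  shows "shared c \<subseteq> board j \<union> board (Suc j)"
proof
  fix x assume "x \<in> shared c"
  then obtain m where "0 < m" "m \<le> N" "x \<in> board m"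
    using shared_on_board assms(1) by blast
  then show "x \<in> board j \<union> board (Suc j)"
    using shared_shown_only_around[OF assms \<open>x \<in> shared c\<close>] by auto
qed

lemma board_after_not_shared:
  assumes "c < 2" "13 \<le> card (hand N c) + card (hand N (c + 2))" "placed j" "j mod 2 = c"
  shows "\<not> board (Suc j) \<subseteq> shared c"
proof
  assume shared: "board (Suc j) \<subseteq> shared c"
  have "j < N" using assms(3) unfolding placed_def by simp
  then have "board (Suc j) \<noteq> {}"
    using board_nonempty[of "Suc j"] board_ends_nonempty by simp
  show False
  proof (cases "Suc j = N")
    case True
    then show False using shared_off_board_N[OF assms(1)] shared \<open>board (Suc j) \<noteq> {}\<close> by auto
  next
    case False
    then have "Suc j < N" using \<open>j < N\<close> by simp
    then have "board (Suc j) \<inter> board (Suc (Suc j)) \<noteq> {}"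
      using step_keeps_an_end[OF step_at board_nonempty] by simp
    moreover have "board (Suc (Suc j)) \<inter> shared c = {}"
    proof (rule equals0I)
      fix x assume "x \<in> board (Suc (Suc j)) \<inter> shared c"
      then show False
        using shared_shown_only_around[OF assms, of x "Suc (Suc j)"] \<open>Suc j < N\<close> by simp
    qed
    ultimately show False using shared by blast
  qed
qed

lemma board_before_not_shared:
  assumes "c < 2" "13 \<le> card (hand N c) + card (hand N (c + 2))" "placed j" "j mod 2 = c" "1 < j"
  shows "\<not> board j \<subseteq> shared c"
proof
  assume shared: "board j \<subseteq> shared c"
  have "j < N" using assms(3) unfolding placed_def by simp
  then have "board (j - 1) \<inter> board j \<noteq> {}"
    using step_keeps_an_end[OF step_at[of "j - 1"] board_nonempty[of "j - 1"]] assms(5) by simp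
  moreover have "board (j - 1) \<inter> shared c = {}"
  proof (rule equals0I)
    fix x assume "x \<in> board (j - 1) \<inter> shared c"
    moreover have "j - 1 \<le> N" using \<open>j < N\<close> by simp
    ultimately show False
      using shared_shown_only_around[OF assms(1-4), of x "j - 1"] assms(5) by auto
  qed
  ultimately show False using shared by blast
qed

lemma board_1_unheld:
  assumes "0 < N"
  obtains y where "unheld y" "board 1 = tile_nums y"
proof -
  obtain y where "y \<in> hand 0 0" "y \<notin> hand 1 0"
    using placed_tile[OF placed_0[OF assms]] by auto
  then have "unheld y" "board 1 = tile_nums y"
    using removed_unheld[OF assms, of 0 y] step_first_tile[OF step_at[OF assms] empty_board_0]
    by simp_all
  then show thesis by (rule that)
qed

lemma unheld_covering:
  assumes "b \<le> 6"
  obtains t where "unheld t" "b \<in> tile_nums t"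
proof -
  obtain l where "l \<in> board N" by (rule final_end)
  then show thesis
    using that unheld_with_final_end[OF _ assms] tile_nums_min_max by blast
qed

lemma shared_covered_if_placed_later:
  assumes "c < 2" "13 \<le> card (hand N c) + card (hand N (c + 2))" "placed j" "j mod 2 = c" "0 < j"
  obtains t where "unheld t" "shared c \<subseteq> tile_nums t"
proof -
  note around = shared_subset_boards[OF assms(1-4)]
  have "j < N" using assms(3) unfolding placed_def by simp
  obtain y where y: "y \<in> hand j (j mod 4)" "y \<notin> hand (Suc j) (j mod 4)"
    by (rule placed_tile[OF assms(3)])
  have "unheld y" using removed_unheld[OF \<open>j < N\<close> _ y] by simp
  have "snd (ss ! j) \<noteq> None" using board_nonempty[OF assms(5)] \<open>j < N\<close> by simp
  then obtain l r where lr: "snd (ss ! j) = Some (l, r)" by auto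
  then obtain a b w where abw: "board j = {a, b}" "tile_nums y = {a, w}" "board (Suc j) = {w, b}"
    using step_placed_tile[OF step_at[OF \<open>j < N\<close>] lr y] by blast
  have w: "b \<in> shared c \<Longrightarrow> w \<notin> shared c"
    using board_after_not_shared[OF assms(1-4)] abw(3) by auto
  consider "b \<notin> shared c" | "b \<in> shared c" "j = 1" | "b \<in> shared c" "1 < j"
    using assms(5) by linarith
  then show thesis
  proof cases
    case 1
    then show thesis using \<open>unheld y\<close> around abw by (intro that[of y]) auto
  next
    case 2
    obtain y0 where "unheld y0" "board 1 = tile_nums y0"
      using board_1_unheld \<open>j < N\<close> 2(2) by auto
    moreover have "shared c \<subseteq> board 1" using around abw w 2 by auto
    ultimately show thesis by (intro that[of y0]) auto
  next
    case 3
    then have "a \<notin> shared c" using board_before_not_shared[OF assms(1-4)] abw(1) by auto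
    then have "shared c \<subseteq> {b}" using around abw w 3(1) by auto
    moreover have "b \<le> 6" using board_le_6[of j] \<open>j < N\<close> abw(1) by auto
    moreover obtain t where "unheld t" "b \<in> tile_nums t"
      using unheld_covering[OF \<open>b \<le> 6\<close>] by blast
    ultimately show thesis by (intro that[of t]) auto
  qed
qed

lemma shared_covered:
  assumes "c < 2" "13 \<le> card (hand N c) + card (hand N (c + 2))"
  obtains t where "unheld t" "shared c \<subseteq> tile_nums t"
proof (cases "\<exists>j. placed j \<and> j mod 2 = c")
  case False
  then have "shared c = {}" using shared_empty_if_team_never_places[OF assms(1)] by blast
  moreover obtain t where "unheld t" by (rule unheld_covering[of 0]) simp
  ultimately show thesis by (intro that[of t]) auto
next
  case True
  then obtain j where j: "placed j" "j mod 2 = c" by blast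
  show thesis
  proof (cases "j = 0")
    case True
    have "0 < N" using j(1) unfolding placed_def by simp
    then obtain y0 where "unheld y0" "board 1 = tile_nums y0" by (rule board_1_unheld)
    moreover have "shared c \<subseteq> board 1"
      using shared_subset_boards[OF assms j] True empty_board_0 by (simp add: board_ends_def)
    ultimately show thesis by (intro that[of y0]) auto
  next
    case False
    then show thesis using shared_covered_if_placed_later[OF assms j] that by blast
  qed
qed

lemma team_pips_le_107:
  assumes "c < 2"
  shows "sum pips (hand N c) + sum pips (hand N (c + 2)) \<le> 107"
proof -
  have tiles: "hand N c \<subseteq> tiles" "hand N (c + 2) \<subseteq> tiles"
    using hand_subset_tiles assms by simp_all
  have disj: "hand N c \<inter> hand N (c + 2) = {}"
    using hands_disjoint assms by simp
  have fin: "finite (hand N c)" "finite (hand N (c + 2))"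
    using finite_hand assms by simp_all
  show ?thesis
  proof (cases "card (hand N c) + card (hand N (c + 2)) \<le> 12")
    case True
    then show ?thesis
      using sum_pips_le_7_card[of "hand N c \<union> hand N (c + 2)"] tiles
        sum.union_disjoint[OF fin disj, of pips] card_Un_disjoint[OF fin disj] by simp
  next
    case False
    then have many: "13 \<le> card (hand N c) + card (hand N (c + 2))" by simp
    obtain l where l: "l \<in> board N" "l \<le> 6" by (rule final_end)
    obtain t where t: "unheld t" "shared c \<subseteq> tile_nums t"
      by (rule shared_covered[OF assms many])
    show ?thesis
    proof (rule pips_le_107[OF tiles disj l(2) _ _ _ _ many _ _ _ _ t(2)[unfolded shared_def]])
      show "l \<notin> nums_of (hand N c)" "l \<notin> nums_of (hand N (c + 2))"
        using board_N_unmatched[of c] board_N_unmatched[of "c + 2"] l(1) assms by auto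
      show "card (hand N c) \<le> 7" "card (hand N (c + 2)) \<le> 7"
        using card_hand_N_le_7 assms by simp_all
      show "t \<in> tiles" "t \<notin> hand N c" "t \<notin> hand N (c + 2)"
        using t(1) assms unfolding unheld_def by simp_all
      assume "card (hand N c) + card (hand N (c + 2)) = 14"
      then show "nums_of (hand N c) \<inter> nums_of (hand N (c + 2)) = {}"
        using team_never_places[OF assms] shared_empty_if_team_never_places[OF assms]
        unfolding shared_def by blast
    qed
  qed
qed

lemma winner_points_le_107: "winner_points (last ss) = Some pts \<Longrightarrow> pts \<le> 107"
  using team_pips_le_107[of 0, unfolded add_0]
    team_pips_le_107[of 1, unfolded one_plus_numeral semiring_norm]
  by (auto simp: winner_points_def team_pips_def last_ss Let_def split: if_splits)

end

section \<open>A tranca worth 107 points\<close>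

(* None is a pass; Some (x, e) places the tile x, after which the open ends are e. *)
type_synonym move = "(tile \<times> (nat \<times> nat)) option"

definition apply_move :: "nat \<Rightarrow> state \<Rightarrow> move \<Rightarrow> state" where
  "apply_move p s m = (case m of None \<Rightarrow> s | Some (x, e) \<Rightarrow> ((fst s)(p := fst s p - {x}), Some e))"

definition legal_move :: "nat \<Rightarrow> state \<Rightarrow> move \<Rightarrow> bool" where
  "legal_move p s m = (case m of
      None \<Rightarrow> (case snd s of None \<Rightarrow> False
        | Some (l, r) \<Rightarrow> (\<forall>x\<in>fst s p. \<not> has_num l x \<and> \<not> has_num r x))
    | Some (x, e) \<Rightarrow> x \<in> fst s p \<and> (case snd s of None \<Rightarrow> e = x
        | Some (l, r) \<Rightarrow> (has_num l x \<and> e = (other_num l x, r)) \<or>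
          (has_num r x \<and> e = (l, other_num r x))))"

lemma step_apply_move:
  assumes "legal_move p s m"
  shows "step p s (apply_move p s m)"
proof (cases m)
  case None
  then obtain l r where "snd s = Some (l, r)"
    using assms by (auto simp: legal_move_def split: option.splits)
  then show ?thesis using assms None by (simp add: legal_move_def apply_move_def step_def)
next
  case (Some xe)
  then obtain x e where "m = Some (x, e)" by (cases xe) auto
  then show ?thesis
    using assms by (cases "snd s") (auto simp: legal_move_def apply_move_def step_def)
qed

fun replay :: "nat \<Rightarrow> state \<Rightarrow> move list \<Rightarrow> state list" where
  "replay k s [] = [s]"
| "replay k s (m # ms) = s # replay (Suc k) (apply_move (k mod 4) s m) ms"

fun legal_moves :: "nat \<Rightarrow> state \<Rightarrow> move list \<Rightarrow> bool" where
  "legal_moves k s [] = True"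
| "legal_moves k s (m # ms) \<longleftrightarrow>
    legal_move (k mod 4) s m \<and> legal_moves (Suc k) (apply_move (k mod 4) s m) ms"

lemma length_replay: "length (replay k s ms) = Suc (length ms)"
  by (induction ms arbitrary: k s) auto

lemma replay_nth_0: "replay k s ms ! 0 = s"
  by (cases ms) auto

lemma step_replay:
  "legal_moves k s ms \<Longrightarrow> i < length ms \<Longrightarrow>
    step ((k + i) mod 4) (replay k s ms ! i) (replay k s ms ! Suc i)"
proof (induction ms arbitrary: k s i)
  case (Cons m ms)
  show ?case
  proof (cases i)
    case 0
    then show ?thesis using Cons.prems step_apply_move by (simp add: replay_nth_0)
  next
    case (Suc i')
    then show ?thesis using Cons.IH[of "Suc k" _ i'] Cons.prems by simp
  qed
qed simp

lemma all_less_4: "(\<forall>p<(4::nat). P p) \<longleftrightarrow> P 0 \<and> P 1 \<and> P 2 \<and> (P 3 :: bool)"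
  by (auto simp: less_Suc_eq numeral_eq_Suc)

definition example_deal :: "nat \<Rightarrow> tile set" where
  "example_deal p = [{(0,0),(0,2),(0,4),(0,5),(1,1),(1,2),(1,3)},
                     {(1,5),(1,6),(2,5),(2,6),(5,5),(5,6),(6,6)},
                     {(0,1),(0,3),(0,6),(1,4),(2,2),(2,3),(2,4)},
                     {(3,3),(3,4),(3,5),(3,6),(4,4),(4,5),(4,6)}] ! p"

definition example_moves :: "move list" where
  "example_moves = [Some ((0,0), (0,0)), None, Some ((0,1), (1,0)), None, Some ((1,3), (3,0)), None,
    Some ((0,3), (0,0)), None, Some ((0,4), (4,0)), None, Some ((2,4), (2,0)), None,
    Some ((0,5), (2,5)), Some ((5,6), (2,6)), Some ((0,6), (2,0)), None, Some ((0,2), (0,0))]"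

definition example_game :: "state list" where
  "example_game = replay 0 (example_deal, None) example_moves"

lemma is_deal_example: "is_deal example_deal"
proof -
  have "(\<Union>p<4. example_deal p) = tiles"
    unfolding tiles_enum
    by (rule equalityI) (simp_all add: numeral_eq_Suc lessThan_Suc example_deal_def)
  moreover have "\<forall>p<4. example_deal p \<subseteq> tiles \<and> card (example_deal p) = 7"
    "\<forall>p<4. \<forall>q<4. p \<noteq> q \<longrightarrow> example_deal p \<inter> example_deal q = {}"
    unfolding all_less_4 by (simp_all add: example_deal_def tiles_def)
  ultimately show ?thesis unfolding is_deal_def by blast
qed

lemma tranca_game_example: "tranca_game example_game"
  unfolding tranca_game_def
proof (intro conjI)
  let ?s0 = "(example_deal, None) :: state"
  have hd: "hd example_game = ?s0" and len: "length example_game = 18"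
    by (simp_all add: example_game_def example_moves_def)
  show "example_game \<noteq> []" "snd (hd example_game) = None" "is_deal (fst (hd example_game))"
    using len hd is_deal_example by auto
  have "legal_moves 0 ?s0 example_moves"
    by (simp add: example_moves_def example_deal_def legal_move_def apply_move_def has_num_def
        other_num_def)
  then show "\<forall>k<length example_game - 1. step (k mod 4) (example_game ! k) (example_game ! (k + 1))"
    using step_replay[of 0 ?s0 example_moves] by (simp add: example_game_def length_replay)
  have "\<forall>s\<in>set example_game. \<forall>p<4. fst s p \<noteq> {}"
    unfolding all_less_4
    by (simp add: example_game_def example_moves_def example_deal_def apply_move_def insert_Diff_if)
  then show "\<forall>k<length example_game. \<forall>p<4. fst (example_game ! k) p \<noteq> {}"
    by (simp add: all_set_conv_all_nth)
  have "\<forall>s\<in>set (butlast example_game). \<not> blocked s"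
    unfolding blocked_def all_less_4
    by (simp add: example_game_def example_moves_def example_deal_def apply_move_def has_num_def
        insert_Diff_if)
  then show "\<forall>k<length example_game - 1. \<not> blocked (example_game ! k)"
    by (simp add: all_set_conv_all_nth nth_butlast)
  show "blocked (last example_game)"
    unfolding blocked_def all_less_4
    by (simp add: example_game_def example_moves_def example_deal_def apply_move_def has_num_def
        insert_Diff_if)
qed

lemma winner_points_example: "winner_points (last example_game) = Some 107"
  by (simp add: example_game_def example_moves_def example_deal_def apply_move_def winner_points_def
      team_pips_def pips_def insert_Diff_if Let_def)

theorem mainTheorem1:
  shows "(\<exists>ss. tranca_game ss \<and> winner_points (last ss) = Some 107) \<and>
         (\<forall>ss pts. tranca_game ss \<and> winner_points (last ss) = Some pts \<longrightarrow> pts \<le> 107)"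
proof
  show "\<exists>ss. tranca_game ss \<and> winner_points (last ss) = Some 107"
    using tranca_game_example winner_points_example by blast
  show "\<forall>ss pts. tranca_game ss \<and> winner_points (last ss) = Some pts \<longrightarrow> pts \<le> 107"
    using tranca_run.winner_points_le_107 unfolding tranca_run_def by blast
qed

end
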